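(* Let $f:\mathbb{Z}\times\mathbb{Z}\to\mathbb{C}$ satisfy, for all $m,n,l\in\mathbb{Z}$, $f(m,n)-f(n,m)=n-m$ and $(n-m)f(m+n,l)=f(n,l)f(m,n+l)-f(m,l)f(n,m+l)$. Then $f(m,0)=f(0,0)$ for all $m\in\mathbb{Z}$.
   Context: These two identities are exactly the conditions for $x_mx_n=f(m,n)x_{m+n}$ to be a left-symmetric algebra structure on the Witt algebra (basis $\{x_n\}$, $[x_m,x_n]=(n-m)x_{m+n}$) with commutator equal to the Witt bracket. *)

theory Defs
  imports Complex_Main
begin

end

theory Submission
  imports Defs
begin

text \<open>Putting m = 0 in the associativity identity gives f(m,0) (f(0,0) - f(m,0)) = 0, so each
f(m,0) is 0 or f(0,0). If f(m,0) = 0 for some m \<noteq> 0, then g(i,j) = f(im,jm)/m satisfies the same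
identities with g(1,0) = 0. Solving the identities for finitely many values of g near the origin
under g(0,0) \<noteq> 0 yields two different values of g(0,0), hence g(0,0) = 0, i.e. f(0,0) = 0 = f(m,0).\<close>

text \<open>The product x_m x_n = f(m,n) x_(m+n) on the Witt algebra is left-symmetric with the Witt
bracket as commutator exactly when f satisfies these two identities.\<close>

locale witt_lsa =
  fixes f :: "int \<Rightarrow> int \<Rightarrow> 'a :: field_char_0"
  assumes skew: "\<And>m n. f m n - f n m = of_int (n - m)"
    and assoc: "\<And>m n l. of_int (n - m) * f (m + n) l = f n l * f m (n + l) - f m l * f n (m + l)"
begin

lemma f_0_left: "f 0 k = f k 0 + of_int k"
  using skew[of 0 k] by (simp add: algebra_simps)

lemma f_mult_diff_eq_0: "f k l * (f l 0 - f (k + l) 0) = 0"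
proof -
  have "of_int k * f k l = f k l * f 0 (k + l) - f 0 l * f k l"
    using assoc[of 0 k l] by (simp add: algebra_simps)
  then show ?thesis
    using f_0_left[of "k + l"] f_0_left[of l] by (simp add: algebra_simps)
qed

lemma f_0_cases: "f m 0 = 0 \<or> f m 0 = f 0 0"
  using f_mult_diff_eq_0[of m 0] by auto

lemma rescale:
  assumes "m \<noteq> 0"
  shows "witt_lsa (\<lambda>i j. f (i * m) (j * m) / of_int m)"
proof
  have m: "(of_int m :: 'a) \<noteq> 0"
    using assms by simp
  fix i j l :: int
  show "f (i * m) (j * m) / of_int m - f (j * m) (i * m) / of_int m = of_int (j - i)"
    using skew[of "i * m" "j * m"] m by (simp add: field_simps left_diff_distrib)
  have "of_int (j * m - i * m) * f (i * m + j * m) (l * m)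
      = f (j * m) (l * m) * f (i * m) (j * m + l * m) - f (i * m) (l * m) * f (j * m) (i * m + l * m)"
    by (rule assoc)
  then show "of_int (j - i) * (f ((i + j) * m) (l * m) / of_int m)
      = f (j * m) (l * m) / of_int m * (f (i * m) ((j + l) * m) / of_int m)
        - f (i * m) (l * m) / of_int m * (f (j * m) ((i + l) * m) / of_int m)"
    using m by (simp add: field_simps distrib_right left_diff_distrib power2_eq_square)
      (drule arg_cong[where f = "\<lambda>x. of_int m * x"], simp add: algebra_simps)
qed

context
  assumes f_1_0: "f 1 0 = 0"
    and f_0_0: "f 0 0 \<noteq> 0"
begin

lemma values_near_origin:
  "f (-1) 1 = 0" "f 1 (-1) = -2" "f (-1) 0 = f 0 0" "f 2 (-1) = 0" "f 2 0 = 0"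
proof -
  show fm11: "f (-1) 1 = 0"
    using f_mult_diff_eq_0[of "-1" 1] f_1_0 f_0_0 by simp
  then show f1m1: "f 1 (-1) = -2"
    using skew[of "-1" 1] by (simp add: minus_equation_iff)
  show fm10: "f (-1) 0 = f 0 0"
    using assoc[of "-1" 1 0] f_1_0 fm11 f1m1 by simp
  show f2m1: "f 2 (-1) = 0"
    using f_mult_diff_eq_0[of 2 "-1"] fm10 f_1_0 f_0_0 by simp
  have "f (-1) 2 = 3"
    using skew[of 2 "-1"] f2m1 by simp
  then show "f 2 0 = 0"
    using assoc[of 2 "-1" 0] f_1_0 f2m1 by simp
qed

lemma f_0_0_eq_minus_5_8: "f 0 0 = -5/8"
proof -
  note values_near_origin
  have fm12: "f (-1) 2 = 3"
    using skew[of 2 "-1"] \<open>f 2 (-1) = 0\<close> by simp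
  have f11: "f 1 1 = 2/3"
    using assoc[of 1 "-1" 1] f_0_left[of 1] f_1_0 \<open>f (-1) 1 = 0\<close> fm12 by simp
  have fm21: "f (-2) 1 = 0"
    using f_mult_diff_eq_0[of "-2" 1] f_1_0 \<open>f (-1) 0 = f 0 0\<close> f_0_0 by simp
  have "f (-2) 2 = 0"
    using assoc[of 1 "-2" 1] \<open>f (-1) 1 = 0\<close> fm21 \<open>f 1 (-1) = -2\<close> f11 by simp
  then have f2m2: "f 2 (-2) = -4"
    using skew[of 2 "-2"] by simp
  have fm1m1: "f (-1) (-1) = -3/2"
    using assoc[of "-1" 2 "-1"] \<open>f 1 (-1) = -2\<close> \<open>f 2 (-1) = 0\<close> \<open>f (-1) 1 = 0\<close> f2m2
    by simp (simp add: field_simps minus_equation_iff)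
  have f1m2: "f 1 (-2) = -3"
    using skew[of 1 "-2"] fm21 by simp
  show ?thesis
    using assoc[of 1 "-1" "-1"] f_0_left[of "-1"] \<open>f (-1) 0 = f 0 0\<close> fm1m1 f1m2 \<open>f 1 (-1) = -2\<close>
    by simp (simp add: field_simps minus_equation_iff eq_diff_eq)
qed

lemma f_0_0_eq_minus_13_12: "f 0 0 = -13/12"
proof -
  note values_near_origin
  have f3m1: "f 3 (-1) = 0"
    using assoc[of 2 1 "-1"] \<open>f 1 (-1) = -2\<close> \<open>f 2 0 = 0\<close> \<open>f 2 (-1) = 0\<close> by simp
  have "f 3 0 = 0"
    using assoc[of 2 1 0] f_1_0 \<open>f 2 0 = 0\<close> by simp
  then have "f (-3) 3 = 0"
    using f_mult_diff_eq_0[of "-3" 3] f_0_0 by simp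
  then have f3m3: "f 3 (-3) = -6"
    using skew[of 3 "-3"] by simp
  have "f (-3) 2 = 0"
    using f_mult_diff_eq_0[of "-3" 2] \<open>f 2 0 = 0\<close> \<open>f (-1) 0 = f 0 0\<close> f_0_0 by simp
  then have f2m3: "f 2 (-3) = -5"
    using skew[of 2 "-3"] by simp
  have "4 * f 0 (-1) = f 2 (-1) * f (-2) 1 - f (-2) (-1) * f 2 (-3)"
    using assoc[of "-2" 2 "-1"] by (simp add: algebra_simps)
  then have fm2m1: "f (-2) (-1) = 4 * (f 0 0 - 1) / 5"
    using f_0_left[of "-1"] \<open>f (-1) 0 = f 0 0\<close> \<open>f 2 (-1) = 0\<close> f2m3 by simp
  have "5 * f 1 (-1) = f 3 (-1) * f (-2) 2 - f (-2) (-1) * f 3 (-3)"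
    using assoc[of "-2" 3 "-1"] by (simp add: algebra_simps)
  then have "24 * f 0 0 + 26 = 0"
    using \<open>f 1 (-1) = -2\<close> f3m1 f3m3 fm2m1 by (simp add: field_simps)
  moreover have "f 0 0 = (24 * f 0 0 + 26) / 24 - 13/12"
    by (simp add: field_simps)
  ultimately show ?thesis
    by simp
qed

end

lemma f_0_0_eq_0_if_f_1_0_eq_0:
  assumes "f 1 0 = 0"
  shows "f 0 0 = 0"
  using f_0_0_eq_minus_5_8 f_0_0_eq_minus_13_12 assms by fastforce

lemma f_m_0_eq_f_0_0: "f m 0 = f 0 0"
proof (rule ccontr)
  assume ne: "f m 0 \<noteq> f 0 0"
  then have fm0: "f m 0 = 0"
    using f_0_cases by blast
  with ne have "m \<noteq> 0"
    by auto
  then have "f 0 0 / of_int m = 0"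
    using witt_lsa.f_0_0_eq_0_if_f_1_0_eq_0[OF rescale] fm0 by simp
  with \<open>m \<noteq> 0\<close> ne fm0 show False
    by simp
qed

end

theorem lemma3p1:
  fixes f :: "int \<Rightarrow> int \<Rightarrow> complex"
  assumes comm: "\<And>m n. f m n - f n m = of_int (n - m)"
    and assoc: "\<And>m n l. of_int (n - m) * f (m + n) l
                  = f n l * f m (n + l) - f m l * f n (m + l)"
  shows "\<forall>m. f m 0 = f 0 0"
proof -
  interpret witt_lsa f
    using comm assoc by unfold_locales
  show ?thesis
    using f_m_0_eq_f_0_0 by blast
qed

end
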